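(* For real $\omega$ and $k\in\mathbb{Z}_+$ let $\mu_k(\omega)=\int_{-1}^1 x^k{\mathrm e}^{{\mathrm i}\omega x}\,\mathrm{d}x$, and for $n\geq 0$ let $h_n(\omega)=\det[\mu_{i+j}(\omega)]_{i,j=0}^{n}$ be the $(n+1)\times(n+1)$ Hankel determinant. Then there is no $n\geq 1$ and $\omega^*>0$ such that $h_{n-1}(\omega^* )=h_n(\omega^* )=0$. *)

theory Defs
  imports "HOL-Analysis.Analysis" "Jordan_Normal_Form.Determinant"
begin

definition moment :: "nat \<Rightarrow> real \<Rightarrow> complex" where
  "moment k \<omega> = integral {-1..1} (\<lambda>x::real. complex_of_real (x ^ k) * exp (\<i> * complex_of_real (\<omega> * x)))"

definition hankel_det :: "nat \<Rightarrow> real \<Rightarrow> complex" where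
  "hankel_det n \<omega> = det (mat (Suc n) (Suc n) (\<lambda>(i, j). moment (i + j) \<omega>))"

end

theory Submission imports Defs begin

text \<open>
  Write L p for the integral of p(x) e^(i\<omega>x) over [-1, 1], so that h_m(\<omega>) = 0 means that
  some nonzero polynomial q of degree at most m satisfies L(x^k q) = 0 for all k \<le> m.
  Such a q has degree exactly m: if deg q < m, integrating (q^2 h)' by parts with h = 1 \<plusminus> x
  forces q(\<plusminus>1) = 0, after which integration by parts shows that q' has the same property,
  and descending on the degree gives q = 0.
  Now let q and r come from h_(n-1) = 0 and h_n = 0. If L(x^n q) = 0, then q would serve for
  h_n with degree < n; otherwise 0 = L(q r) = lead_coeff r \<cdot> L(x^n q), so deg r < n.
\<close>

definition osc_integral :: "real \<Rightarrow> complex poly \<Rightarrow> complex" where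
  "osc_integral \<omega> p = integral {-1..1} (\<lambda>x::real. poly p (of_real x) * exp (\<i> * of_real (\<omega> * x)))"

lemma osc_integral_has_integral:
  "((\<lambda>x::real. poly p (of_real x) * exp (\<i> * of_real (\<omega> * x))) has_integral osc_integral \<omega> p) {-1..1}"
  unfolding osc_integral_def
  by (intro integrable_integral integrable_continuous_real continuous_intros)

lemma osc_integral_add: "osc_integral \<omega> (p + q) = osc_integral \<omega> p + osc_integral \<omega> q"
proof -
  have "((\<lambda>x::real. poly (p + q) (of_real x) * exp (\<i> * of_real (\<omega> * x)))
          has_integral osc_integral \<omega> p + osc_integral \<omega> q) {-1..1}"
    using has_integral_add[OF osc_integral_has_integral osc_integral_has_integral]
    by (simp add: distrib_right)
  then show ?thesis
    using osc_integral_has_integral has_integral_unique by blast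
qed

lemma osc_integral_smult: "osc_integral \<omega> (Polynomial.smult c p) = c * osc_integral \<omega> p"
proof -
  have "((\<lambda>x::real. poly (Polynomial.smult c p) (of_real x) * exp (\<i> * of_real (\<omega> * x)))
          has_integral c * osc_integral \<omega> p) {-1..1}"
    using has_integral_mult_right[OF osc_integral_has_integral, of c]
    by (simp add: mult.assoc)
  then show ?thesis
    using osc_integral_has_integral has_integral_unique by blast
qed

lemma osc_integral_sum: "osc_integral \<omega> (\<Sum>i\<in>A. f i) = (\<Sum>i\<in>A. osc_integral \<omega> (f i))"
  by (induction A rule: infinite_finite_induct) (simp_all add: osc_integral_add osc_integral_def[where p = 0])

lemma osc_integral_monom: "osc_integral \<omega> (monom c k) = c * moment k \<omega>"
proof -
  have "osc_integral \<omega> (monom 1 k) = moment k \<omega>"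
    unfolding osc_integral_def moment_def by (simp add: poly_monom)
  then show ?thesis
    by (metis osc_integral_smult Polynomial.smult_monom mult.right_neutral)
qed

lemma osc_integral_pderiv:
  "osc_integral \<omega> (pderiv p) + \<i> * of_real \<omega> * osc_integral \<omega> p
     = poly p 1 * exp (\<i> * of_real \<omega>) - poly p (-1) * exp (- (\<i> * of_real \<omega>))"
proof -
  define g where "g z = poly p z * exp (\<i> * of_real \<omega> * z)" for z
  define g' where "g' z = poly (pderiv p) z * exp (\<i> * of_real \<omega> * z)
                          + \<i> * of_real \<omega> * (poly p z * exp (\<i> * of_real \<omega> * z))" for z
  have "(g has_field_derivative g' z) (at z)" for z
  proof -
    have "((\<lambda>z. exp (\<i> * of_real \<omega> * z)) has_field_derivative
            exp (\<i> * of_real \<omega> * z) * (\<i> * of_real \<omega>)) (at z)"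
      by (rule DERIV_chain2[OF DERIV_exp DERIV_cmult_Id])
    from DERIV_mult[OF poly_DERIV[of p] this] show ?thesis
      unfolding g_def g'_def by (simp add: algebra_simps)
  qed
  then have "((\<lambda>x::real. g' (of_real x)) has_integral g 1 - g (-1)) {-1..1}"
    using fundamental_theorem_of_calculus[of "-1" 1 "\<lambda>x. g (of_real x)" "\<lambda>x. g' (of_real x)"]
    by (auto intro!: has_vector_derivative_real_field)
  moreover have "(\<lambda>x::real. g' (of_real x)) = (\<lambda>x. poly (pderiv p) (of_real x) * exp (\<i> * of_real (\<omega> * x))
                   + \<i> * of_real \<omega> * (poly p (of_real x) * exp (\<i> * of_real (\<omega> * x))))"
    by (simp add: g'_def algebra_simps)
  then have "((\<lambda>x::real. g' (of_real x)) has_integral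
               osc_integral \<omega> (pderiv p) + \<i> * of_real \<omega> * osc_integral \<omega> p) {-1..1}"
    by (simp only:) (intro has_integral_add osc_integral_has_integral has_integral_mult_right)
  ultimately show ?thesis
    by (simp add: g_def has_integral_unique)
qed

definition annihilates_upto :: "real \<Rightarrow> nat \<Rightarrow> complex poly \<Rightarrow> bool" where
  "annihilates_upto \<omega> m q \<longleftrightarrow> (\<forall>k\<le>m. osc_integral \<omega> (monom 1 k * q) = 0)"

lemma osc_integral_mult_eq_sum_coeff:
  assumes "degree p \<le> N"
  shows "osc_integral \<omega> (p * q) = (\<Sum>i\<le>N. coeff p i * osc_integral \<omega> (monom 1 i * q))"
proof -
  have "p * q = (\<Sum>i\<le>N. Polynomial.smult (coeff p i) (monom 1 i * q))"
    by (subst poly_as_sum_of_monoms'[OF assms, symmetric])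
       (simp add: sum_distrib_right Polynomial.smult_monom flip: mult_smult_left)
  then show ?thesis
    by (simp add: osc_integral_sum osc_integral_smult)
qed

lemma annihilates_upto_mult:
  "annihilates_upto \<omega> m q \<Longrightarrow> degree p \<le> m \<Longrightarrow> osc_integral \<omega> (p * q) = 0"
  using osc_integral_mult_eq_sum_coeff[of p m \<omega> q] unfolding annihilates_upto_def by simp

lemma annihilates_upto_boundary:
  assumes ann: "annihilates_upto \<omega> m q" and deg: "degree q < m"
  shows "poly q 1 = 0" "poly q (-1) = 0"
proof -
  have boundary: "poly q 1 ^ 2 * poly h 1 * exp (\<i> * of_real \<omega>)
                    = poly q (-1) ^ 2 * poly h (-1) * exp (- (\<i> * of_real \<omega>))"
    if "degree h \<le> 1" for h
  proof -
    have "degree (q * h) \<le> m" "degree (pderiv q * h) \<le> m"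
      using degree_mult_le[of q h] degree_mult_le[of "pderiv q" h] degree_pderiv[of q] that deg
      by linarith+
    moreover have "degree (pderiv (q * h)) \<le> m"
      using \<open>degree (q * h) \<le> m\<close> degree_pderiv[of "q * h"] by linarith
    ultimately have "osc_integral \<omega> (q * h * q) = 0"
      "osc_integral \<omega> (pderiv (q * h) * q) = 0" "osc_integral \<omega> (pderiv q * h * q) = 0"
      using annihilates_upto_mult[OF ann] by blast+
    moreover have "pderiv (q * h * q) = pderiv (q * h) * q + pderiv q * h * q"
      by (simp add: pderiv_mult algebra_simps)
    ultimately show ?thesis
      using osc_integral_pderiv[of \<omega> "q * h * q"]
      by (simp add: osc_integral_add power2_eq_square algebra_simps)
  qed
  from boundary[of "[:1, 1:]"] show "poly q 1 = 0" by simp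
  from boundary[of "[:1, -1:]"] show "poly q (-1) = 0" by simp
qed

lemma annihilates_upto_pderiv:
  assumes ann: "annihilates_upto \<omega> m q" and deg: "degree q < m"
  shows "annihilates_upto \<omega> m (pderiv q)"
  unfolding annihilates_upto_def
proof (intro allI impI)
  fix k assume "k \<le> m"
  then have "degree (pderiv (monom (1::complex) k)) \<le> m" "degree (monom (1::complex) k) \<le> m"
    using degree_pderiv[of "monom (1::complex) k"] by (simp_all add: degree_monom_eq)
  then have "osc_integral \<omega> (pderiv (monom 1 k) * q) = 0" "osc_integral \<omega> (monom 1 k * q) = 0"
    using annihilates_upto_mult[OF ann] by blast+
  moreover have "pderiv (monom 1 k * q) = pderiv (monom 1 k) * q + monom 1 k * pderiv q"
    by (simp add: pderiv_mult)
  ultimately show "osc_integral \<omega> (monom 1 k * pderiv q) = 0"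
    using osc_integral_pderiv[of \<omega> "monom 1 k * q"] annihilates_upto_boundary[OF ann deg]
    by (simp add: osc_integral_add)
qed

lemma annihilates_upto_degree_less_imp_zero:
  assumes "annihilates_upto \<omega> m q" "degree q < m"
  shows "q = 0"
  using assms
proof (induction "degree q" arbitrary: q rule: less_induct)
  case less
  show ?case
  proof (cases "degree q = 0")
    case True
    then obtain c where "q = [:c:]"
      by (rule degree_eq_zeroE)
    then show ?thesis
      using annihilates_upto_boundary(1)[OF less.prems] by simp
  next
    case False
    then have "pderiv q = 0"
      using less.hyps[of "pderiv q"] annihilates_upto_pderiv[OF less.prems] less.prems(2)
            degree_pderiv[of q] by simp
    with False show ?thesis
      by (simp add: pderiv_eq_0_iff)
  qed
qed

lemma annihilates_upto_imp_degree_eq: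
  assumes "annihilates_upto \<omega> m q" "degree q \<le> m" "q \<noteq> 0"
  shows "degree q = m"
  using annihilates_upto_degree_less_imp_zero assms le_neq_implies_less by blast

lemma annihilates_upto_Suc:
  assumes "annihilates_upto \<omega> m q" "osc_integral \<omega> (monom 1 (Suc m) * q) = 0"
  shows "annihilates_upto \<omega> (Suc m) q"
  using assms unfolding annihilates_upto_def by (auto simp: le_Suc_eq)

lemma osc_integral_mult_annihilator:
  assumes "annihilates_upto \<omega> m q" "degree r \<le> Suc m"
  shows "osc_integral \<omega> (r * q) = coeff r (Suc m) * osc_integral \<omega> (monom 1 (Suc m) * q)"
  using assms osc_integral_mult_eq_sum_coeff[OF assms(2), of \<omega> q]
  unfolding annihilates_upto_def by (simp add: atMost_Suc)

lemma hankel_det_eq_0_imp_annihilator: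
  assumes "hankel_det m \<omega> = 0"
  obtains q where "q \<noteq> 0" "degree q \<le> m" "annihilates_upto \<omega> m q"
proof -
  define H where "H = mat (Suc m) (Suc m) (\<lambda>(i, j). moment (i + j) \<omega>)"
  have "H \<in> carrier_mat (Suc m) (Suc m)"
    unfolding H_def by simp
  with assms obtain v where v: "v \<in> carrier_vec (Suc m)" "v \<noteq> 0\<^sub>v (Suc m)" "H *\<^sub>v v = 0\<^sub>v (Suc m)"
    unfolding hankel_det_def H_def by (auto simp: det_0_iff_vec_prod_zero_field)
  define q where "q = (\<Sum>j<Suc m. monom (v $ j) j)"
  have coeff_q: "coeff q k = (if k < Suc m then v $ k else 0)" for k
    unfolding q_def by (simp add: coeff_sum coeff_monom)
  have "degree q \<le> m"
    by (rule degree_le) (simp add: coeff_q)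
  moreover have "q \<noteq> 0"
  proof
    assume "q = 0"
    then have "v $ k = 0" if "k < Suc m" for k
      using coeff_q[of k] that by simp
    then have "v = 0\<^sub>v (Suc m)"
      using v(1) by (intro eq_vecI) auto
    with v(2) show False ..
  qed
  moreover have "osc_integral \<omega> (monom 1 k * q) = 0" if "k \<le> m" for k
  proof -
    have "osc_integral \<omega> (monom 1 k * q) = (\<Sum>j<Suc m. v $ j * moment (k + j) \<omega>)"
      unfolding q_def sum_distrib_left osc_integral_sum mult_monom osc_integral_monom by simp
    also have "\<dots> = (H *\<^sub>v v) $ k"
      using that v(1) unfolding H_def
      by (auto simp: scalar_prod_def mult.commute intro!: sum.cong)
    finally show ?thesis
      using v(3) that by simp
  qed
  ultimately show ?thesis
    using that unfolding annihilates_upto_def by blast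
qed

theorem proposition4:
  "\<not> (\<exists>(n::nat) (\<omega>::real). n \<ge> 1 \<and> \<omega> > 0 \<and> hankel_det (n - 1) \<omega> = 0 \<and> hankel_det n \<omega> = 0)"
proof
  assume "\<exists>(n::nat) (\<omega>::real). n \<ge> 1 \<and> \<omega> > 0 \<and> hankel_det (n - 1) \<omega> = 0 \<and> hankel_det n \<omega> = 0"
  then obtain m \<omega> where "hankel_det m \<omega> = 0" "hankel_det (Suc m) \<omega> = 0"
    by (metis Suc_pred' less_eq_Suc_le One_nat_def)
  obtain q where q: "q \<noteq> 0" "degree q \<le> m" "annihilates_upto \<omega> m q"
    by (rule hankel_det_eq_0_imp_annihilator[OF \<open>hankel_det m \<omega> = 0\<close>])
  obtain r where r: "r \<noteq> 0" "degree r \<le> Suc m" "annihilates_upto \<omega> (Suc m) r"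
    by (rule hankel_det_eq_0_imp_annihilator[OF \<open>hankel_det (Suc m) \<omega> = 0\<close>])
  have "\<not> annihilates_upto \<omega> (Suc m) q"
    using annihilates_upto_imp_degree_eq[of \<omega> "Suc m" q] q by linarith
  then have "osc_integral \<omega> (monom 1 (Suc m) * q) \<noteq> 0"
    using annihilates_upto_Suc[OF q(3)] by blast
  moreover have "osc_integral \<omega> (q * r) = 0"
    using annihilates_upto_mult[OF r(3)] q(2) by simp
  ultimately have "coeff r (Suc m) = 0"
    using osc_integral_mult_annihilator[OF q(3) r(2)] by (simp add: mult.commute)
  moreover have "degree r = Suc m"
    using annihilates_upto_imp_degree_eq r by blast
  ultimately show False
    using r(1) by (metis leading_coeff_0_iff)
qed

end
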